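(* Assume $\mu_n\to0$. Then $\hat\theta_A$ is uniformly consistent for $\theta$: for every $\varepsilon>0$, $$\lim_{n\to\infty}\sup_{\theta\in\mathbb R}P_{n,\theta}\big(|\hat\theta_A-\theta|>\varepsilon\big)=0.$$ Furthermore, with $a_n=\min(n^{1/2},\mu_n^{-1})$, for every $\varepsilon>0$ there exists a real $M\ge0$ such that $$\sup_{n\in\mathbb N}\sup_{\theta\in\mathbb R}P_{n,\theta}\big(a_n|\hat\theta_A-\theta|>M\big)<\varepsilon .$$
   Context: Gaussian location model: for each sample size $n$, $y_1,\dots,y_n$ are i.i.d. $N(\theta,1)$ with $\theta\in\mathbb R$ unknown; $\bar y$ is their mean. $P_{n,\theta}$ denotes the probability governing a sample of size $n$ when $\theta$ is the true parameter. Given a nonrandom tuning parameter $\mu_n>0$, the adaptive LASSO estimator is $\hat\theta_A=0$ if $|\bar y|\le\mu_n$ and $\hat\theta_A=\bar y-\mu_n^2/\bar y$ if $|\bar y|>\mu_n$. *)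

theory Defs
  imports "HOL-Probability.Probability"
begin

definition sample_law :: "nat \<Rightarrow> real \<Rightarrow> (nat \<Rightarrow> real) measure" where
  "sample_law n \<theta> = (\<Pi>\<^sub>M i\<in>{..<n}. density lborel (normal_density \<theta> 1))"

definition sample_mean :: "nat \<Rightarrow> (nat \<Rightarrow> real) \<Rightarrow> real" where
  "sample_mean n y = (\<Sum>i<n. y i) / real n"

text \<open>Adaptive LASSO estimator as a function of the sample mean, tuning parameter mu.\<close>
definition alasso :: "real \<Rightarrow> real \<Rightarrow> real" where
  "alasso \<mu> yb = (if \<bar>yb\<bar> \<le> \<mu> then 0 else yb - \<mu>\<^sup>2 / yb)"

end

theory Submission
  imports Defs
begin

text \<open>
  The adaptive LASSO moves the sample mean by at most the tuning
  parameter: \<open>\<bar>alasso m yb - \<theta>\<bar> \<le> \<bar>yb - \<theta>\<bar> + m\<close>.  Hence every large deviation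
  of the estimator forces a large deviation of the sample mean, and the latter is
  controlled uniformly in \<theta> by Chebyshev's inequality, since the sum of the
  sample is normal with mean \<open>n\<theta>\<close> and variance \<open>n\<close>:
  \<open>P(\<bar>ybar - \<theta>\<bar> \<ge> t) \<le> 1/(n t\<^sup>2)\<close>.

  Uniform consistency follows because for large \<open>n\<close> the
  event \<open>\<bar>alasso - \<theta>\<bar> > \<epsilon>\<close> forces \<open>\<bar>ybar - \<theta>\<bar> \<ge> \<epsilon>/2\<close>; the rate statement
  follows because \<open>a\<^sub>n \<le> sqrt n\<close> and \<open>a\<^sub>n \<mu>\<^sub>n \<le> 1\<close>, so \<open>a\<^sub>n \<bar>alasso - \<theta>\<bar> > M\<close>
  forces \<open>sqrt n \<bar>ybar - \<theta>\<bar> > M - 1\<close>, an event of probability at most \<open>1/(M-1)\<^sup>2\<close>.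
\<close>

abbreviation unit_normal :: "real \<Rightarrow> real measure" where
  "unit_normal \<theta> \<equiv> density lborel (normal_density \<theta> 1)"

lemma prob_space_sample_law: "prob_space (sample_law n \<theta>)"
  unfolding sample_law_def
  by (intro prob_space_PiM prob_space_normal_density) simp

lemma measurable_coordinate:
  assumes "i < n"
  shows "(\<lambda>y. y i) \<in> borel_measurable (sample_law n \<theta>)"
proof -
  have "(\<lambda>y. y i) \<in> measurable (sample_law n \<theta>) (unit_normal \<theta>)"
    unfolding sample_law_def using assms by (intro measurable_component_singleton) simp
  then show ?thesis by (simp cong: measurable_cong_sets)
qed

lemma measurable_sample_mean: "sample_mean n \<in> borel_measurable (sample_law n \<theta>)"
  unfolding sample_mean_def[abs_def]
  by (intro borel_measurable_divide borel_measurable_sum measurable_coordinate) auto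

lemma distr_coordinate:
  assumes "i < n"
  shows "distr (sample_law n \<theta>) borel (\<lambda>y. y i) = unit_normal \<theta>"
proof -
  have "distr (sample_law n \<theta>) borel (\<lambda>y. y i) = distr (sample_law n \<theta>) (unit_normal \<theta>) (\<lambda>y. y i)"
    by (rule distr_cong) auto
  also have "\<dots> = unit_normal \<theta>"
    unfolding sample_law_def using assms
    by (intro distr_PiM_component prob_space_normal_density) auto
  finally show ?thesis .
qed

lemma indep_coordinates:
  assumes "n \<ge> 1"
  shows "prob_space.indep_vars (sample_law n \<theta>) (\<lambda>i. borel) (\<lambda>i y. y i) {..<n}"
proof -
  let ?P = "sample_law n \<theta>"
  interpret P: prob_space ?P by (rule prob_space_sample_law)
  have "distr ?P (\<Pi>\<^sub>M i\<in>{..<n}. borel) (\<lambda>x. \<lambda>i\<in>{..<n}. x i) = distr ?P ?P (\<lambda>x. x)"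
  proof (rule distr_cong)
    show "sets (\<Pi>\<^sub>M i\<in>{..<n}. borel) = sets ?P"
      unfolding sample_law_def by (rule sets_PiM_cong) auto
    show "(\<lambda>i\<in>{..<n}. x i) = x" if "x \<in> space ?P" for x
      using that unfolding sample_law_def by (auto simp: space_PiM PiE_def extensional_def)
  qed simp
  also have "\<dots> = (\<Pi>\<^sub>M i\<in>{..<n}. distr ?P borel (\<lambda>y. y i))"
    unfolding distr_id sample_law_def[of n \<theta>]
    by (rule PiM_cong) (auto simp: distr_coordinate[unfolded sample_law_def])
  finally show ?thesis
    using assms measurable_coordinate
    by (subst P.indep_vars_iff_distr_eq_PiM') (auto simp: lessThan_empty_iff)
qed

lemma distributed_sample_sum:
  assumes "n \<ge> 1"
  shows "distributed (sample_law n \<theta>) lborel (\<lambda>y. \<Sum>i<n. y i)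
           (normal_density (real n * \<theta>) (sqrt (real n)))"
proof -
  interpret P: prob_space "sample_law n \<theta>" by (rule prob_space_sample_law)
  have coord: "distributed (sample_law n \<theta>) lborel (\<lambda>y. y i) (normal_density \<theta> 1)"
    if "i \<in> {..<n}" for i
    using distr_coordinate[of i n \<theta>] measurable_coordinate[of i n \<theta>] that
    by (auto simp: distributed_def cong: distr_cong measurable_cong_sets)
  have "distributed (sample_law n \<theta>) lborel (\<lambda>y. \<Sum>i\<in>{..<n}. y i)
          (normal_density (\<Sum>i\<in>{..<n}. \<theta>) (sqrt (\<Sum>i\<in>{..<n}. 1\<^sup>2)))"
    using assms coord indep_coordinates[OF assms]
    by (intro P.sum_indep_normal) (auto simp: lessThan_empty_iff)
  then show ?thesis by simp
qed

lemma sample_mean_chebyshev: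
  assumes n: "n \<ge> 1" and t: "t > 0"
  shows "measure (sample_law n \<theta>) {y \<in> space (sample_law n \<theta>). \<bar>sample_mean n y - \<theta>\<bar> \<ge> t}
          \<le> 1 / (real n * t\<^sup>2)"
proof -
  let ?P = "sample_law n \<theta>" and ?\<sigma> = "sqrt (real n)"
  interpret P: prob_space ?P by (rule prob_space_sample_law)
  note D = distributed_sample_sum[OF n, of \<theta>]
  let ?f = "\<lambda>y. (\<Sum>i<n. y i) - real n * \<theta>"
  have npos: "real n > 0" and \<sigma>pos: "?\<sigma> > 0" using n by auto
  have f_eq: "?f y = real n * (sample_mean n y - \<theta>)" for y
    using npos by (simp add: sample_mean_def field_simps)
  have meas: "?f \<in> borel_measurable ?P"
    using distributed_measurable[OF D] by (simp cong: measurable_cong_sets)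
  have "integrable lborel (\<lambda>x. normal_density (real n * \<theta>) ?\<sigma> x * (x - real n * \<theta>) ^ 2)"
    using \<sigma>pos by (rule integrable_normal_moment)
  then have int: "integrable ?P (\<lambda>y. ?f y ^ 2)"
    using distributed_integrable[OF D, of "\<lambda>x. (x - real n * \<theta>) ^ 2"] by simp
  have "(\<integral>y. ?f y ^ 2 \<partial>?P) = (\<integral>x. normal_density (real n * \<theta>) ?\<sigma> x * (x - real n * \<theta>) ^ (2*1) \<partial>lborel)"
    using distributed_integral[OF D, of "\<lambda>x. (x - real n * \<theta>) ^ 2"] by simp
  also have "\<dots> = real n"
    using integral_normal_moment_even[OF \<sigma>pos, of "real n * \<theta>" 1] npos by simp
  finally have variance: "(\<integral>y. ?f y ^ 2 \<partial>?P) = real n" .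
  have "{y \<in> space ?P. \<bar>sample_mean n y - \<theta>\<bar> \<ge> t} = {y \<in> space ?P. \<bar>?f y\<bar> \<ge> real n * t}"
    using npos by (auto simp: f_eq abs_mult)
  also have "measure ?P \<dots> \<le> (\<integral>y. ?f y ^ 2 \<partial>?P) / (real n * t)\<^sup>2"
    using npos t by (intro P.second_moment_method[OF meas int]) simp
  also have "\<dots> = 1 / (real n * t\<^sup>2)"
    unfolding variance using npos t by (simp add: power2_eq_square field_simps)
  finally show ?thesis .
qed

lemma prob_forcing_deviation:
  assumes n: "n \<ge> 1" and t: "t > 0"
    and forces: "\<And>y. E y \<Longrightarrow> \<bar>sample_mean n y - \<theta>\<bar> \<ge> t"
  shows "measure (sample_law n \<theta>) {y \<in> space (sample_law n \<theta>). E y} \<le> 1 / (real n * t\<^sup>2)"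
proof -
  interpret P: prob_space "sample_law n \<theta>" by (rule prob_space_sample_law)
  have "{y \<in> space (sample_law n \<theta>). \<bar>sample_mean n y - \<theta>\<bar> \<ge> t} \<in> sets (sample_law n \<theta>)"
    using measurable_sample_mean by measurable
  then have "measure (sample_law n \<theta>) {y \<in> space (sample_law n \<theta>). E y}
     \<le> measure (sample_law n \<theta>) {y \<in> space (sample_law n \<theta>). \<bar>sample_mean n y - \<theta>\<bar> \<ge> t}"
    using forces by (intro P.finite_measure_mono) auto
  also have "\<dots> \<le> 1 / (real n * t\<^sup>2)" by (rule sample_mean_chebyshev[OF n t])
  finally show ?thesis .
qed

lemma SUP_prob_nonneg:
  "0 \<le> (SUP \<theta>\<in>(UNIV::real set). measure (sample_law n \<theta>) (A \<theta>))"
proof -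
  have "bdd_above (range (\<lambda>\<theta>. measure (sample_law n \<theta>) (A \<theta>)))"
    using prob_space.prob_le_1[OF prob_space_sample_law] by (intro bdd_aboveI2)
  then show ?thesis
    by (intro order_trans[OF measure_nonneg cSUP_upper[of 0]]) auto
qed

lemma alasso_deviation:
  assumes "m \<ge> 0"
  shows "\<bar>alasso m yb - \<theta>\<bar> \<le> \<bar>yb - \<theta>\<bar> + m"
proof (cases "\<bar>yb\<bar> \<le> m")
  case True
  then show ?thesis by (simp add: alasso_def)
next
  case False
  have "\<bar>m\<^sup>2 / yb\<bar> = m * (m / \<bar>yb\<bar>)"
    using assms by (simp add: abs_divide power2_eq_square)
  also have "\<dots> \<le> m * 1" using assms False by (intro mult_left_mono) auto
  finally show ?thesis
    using False abs_triangle_ineq4[of "yb - \<theta>" "m\<^sup>2 / yb"] by (simp add: alasso_def algebra_simps)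
qed

lemma scaled_alasso_deviation:
  assumes m: "m \<ge> 0" and a: "0 \<le> a" "a \<le> s" and am: "a * m \<le> 1"
  shows "a * \<bar>alasso m yb - \<theta>\<bar> \<le> s * \<bar>yb - \<theta>\<bar> + 1"
proof -
  have "a * \<bar>alasso m yb - \<theta>\<bar> \<le> a * \<bar>yb - \<theta>\<bar> + a * m"
    using mult_left_mono[OF alasso_deviation[OF m] a(1)] by (simp add: algebra_simps)
  also have "a * \<bar>yb - \<theta>\<bar> \<le> s * \<bar>yb - \<theta>\<bar>" using a by (simp add: mult_right_mono)
  finally show ?thesis using am by linarith
qed

text \<open>Uniform consistency: once \<open>\<mu> n < \<epsilon>/2\<close>, the error event forces
  \<open>\<bar>ybar - \<theta>\<bar> \<ge> \<epsilon>/2\<close>, so its probability is at most \<open>4/(\<epsilon>\<^sup>2 n)\<close> for every \<open>\<theta>\<close>.\<close>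
lemma alasso_uniformly_consistent:
  fixes \<mu> :: "nat \<Rightarrow> real"
  assumes mu_nonneg: "\<And>n. \<mu> n \<ge> 0" and mu_lim: "\<mu> \<longlonglongrightarrow> 0" and e: "\<epsilon> > 0"
  shows "(\<lambda>n. SUP \<theta>\<in>(UNIV::real set).
            measure (sample_law n \<theta>)
              {y \<in> space (sample_law n \<theta>). \<bar>alasso (\<mu> n) (sample_mean n y) - \<theta>\<bar> > \<epsilon>}) \<longlonglongrightarrow> 0"
    (is "?g \<longlonglongrightarrow> 0")
proof (rule tendsto_sandwich[of "\<lambda>n. 0" _ _ "\<lambda>n. (4 / \<epsilon>\<^sup>2) / real n"])
  have "eventually (\<lambda>n. \<mu> n < \<epsilon> / 2 \<and> n \<ge> 1) sequentially"
    using order_tendstoD(2)[OF mu_lim, of "\<epsilon>/2"] e eventually_ge_at_top[of 1]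
    by (auto intro: eventually_conj)
  then show "eventually (\<lambda>n. ?g n \<le> (4 / \<epsilon>\<^sup>2) / real n) sequentially"
  proof eventually_elim
    case (elim n)
    have "measure (sample_law n \<theta>) {y \<in> space (sample_law n \<theta>).
            \<bar>alasso (\<mu> n) (sample_mean n y) - \<theta>\<bar> > \<epsilon>} \<le> 1 / (real n * (\<epsilon>/2)\<^sup>2)" for \<theta>
    proof (rule prob_forcing_deviation)
      fix y assume "\<bar>alasso (\<mu> n) (sample_mean n y) - \<theta>\<bar> > \<epsilon>"
      then show "\<bar>sample_mean n y - \<theta>\<bar> \<ge> \<epsilon> / 2"
        using alasso_deviation[OF mu_nonneg, of n "sample_mean n y" \<theta>] elim by linarith
    qed (use elim e in auto)
    then show ?case
      by (intro cSUP_least) (auto simp: power2_eq_square field_simps)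
  qed
next
  show "eventually (\<lambda>n. 0 \<le> ?g n) sequentially"
    by (intro always_eventually allI SUP_prob_nonneg)
  show "(\<lambda>n. (4 / \<epsilon>\<^sup>2) / real n) \<longlonglongrightarrow> 0" by (rule lim_const_over_n)
qed simp

text \<open>With \<open>a = min (sqrt n) (1/m)\<close>, the event \<open>a \<bar>alasso - \<theta>\<bar> > M\<close> forces
  \<open>sqrt n \<bar>ybar - \<theta>\<bar> > M - 1\<close>, whence a bound free of \<open>n\<close>, \<open>m\<close> and \<open>\<theta>\<close>.\<close>
lemma prob_scaled_alasso_deviation:
  assumes n: "n \<ge> 1" and m: "m > 0" and M: "M > 1"
  shows "measure (sample_law n \<theta>) {y \<in> space (sample_law n \<theta>).
           min (sqrt (real n)) (1 / m) * \<bar>alasso m (sample_mean n y) - \<theta>\<bar> > M}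
         \<le> 1 / (M - 1)\<^sup>2"
proof -
  let ?a = "min (sqrt (real n)) (1 / m)"
  have sn: "sqrt (real n) > 0" using n by simp
  have deviation: "\<bar>sample_mean n y - \<theta>\<bar> \<ge> (M - 1) / sqrt (real n)"
    if "?a * \<bar>alasso m (sample_mean n y) - \<theta>\<bar> > M" for y
  proof -
    have "?a * m \<le> 1" using m by (simp add: min_def field_simps)
    then have "?a * \<bar>alasso m (sample_mean n y) - \<theta>\<bar> \<le> sqrt (real n) * \<bar>sample_mean n y - \<theta>\<bar> + 1"
      using m sn by (intro scaled_alasso_deviation) auto
    then show ?thesis using that sn by (simp add: field_simps)
  qed
  have "measure (sample_law n \<theta>) {y \<in> space (sample_law n \<theta>).
          ?a * \<bar>alasso m (sample_mean n y) - \<theta>\<bar> > M}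
        \<le> 1 / (real n * ((M - 1) / sqrt (real n))\<^sup>2)"
    using n sn M deviation by (intro prob_forcing_deviation) auto
  also have "\<dots> = 1 / (M - 1)\<^sup>2" using n by (simp add: power_divide)
  finally show ?thesis .
qed

lemma alasso_uniform_rate:
  fixes \<mu> :: "nat \<Rightarrow> real"
  assumes mu_pos: "\<And>n. \<mu> n > 0" and M: "M > 1"
  shows "(SUP n\<in>{1::nat..}. SUP \<theta>\<in>(UNIV::real set).
            measure (sample_law n \<theta>)
              {y \<in> space (sample_law n \<theta>).
                 min (sqrt (real n)) (1 / \<mu> n) * \<bar>alasso (\<mu> n) (sample_mean n y) - \<theta>\<bar> > M})
         \<le> 1 / (M - 1)\<^sup>2"
  using prob_scaled_alasso_deviation[OF _ mu_pos M] by (intro cSUP_least) auto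

theorem theorem1:
  fixes \<mu> :: "nat \<Rightarrow> real"
  assumes mu_pos: "\<And>n. \<mu> n > 0"
    and mu_lim: "\<mu> \<longlonglongrightarrow> 0"
  shows "(\<forall>\<epsilon>>0. (\<lambda>n. SUP \<theta>\<in>(UNIV::real set).
            measure (sample_law n \<theta>)
              {y \<in> space (sample_law n \<theta>).
                 \<bar>alasso (\<mu> n) (sample_mean n y) - \<theta>\<bar> > \<epsilon>}) \<longlonglongrightarrow> 0) \<and>
          (\<forall>\<epsilon>>0. \<exists>M::real. M \<ge> 0 \<and>
            (SUP n\<in>{1::nat..}. SUP \<theta>\<in>(UNIV::real set).
               measure (sample_law n \<theta>)
                 {y \<in> space (sample_law n \<theta>).
                    min (sqrt (real n)) (1 / \<mu> n) * \<bar>alasso (\<mu> n) (sample_mean n y) - \<theta>\<bar> > M})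
            < \<epsilon>)"
proof (intro conjI allI impI)
  fix \<epsilon> :: real assume "\<epsilon> > 0"
  then show "(\<lambda>n. SUP \<theta>\<in>(UNIV::real set). measure (sample_law n \<theta>)
      {y \<in> space (sample_law n \<theta>). \<bar>alasso (\<mu> n) (sample_mean n y) - \<theta>\<bar> > \<epsilon>}) \<longlonglongrightarrow> 0"
    using mu_pos mu_lim by (intro alasso_uniformly_consistent) (auto intro: less_imp_le)
next
  fix \<epsilon> :: real assume e: "\<epsilon> > 0"
  define M where "M = 2 + 2 / \<epsilon>"
  have M1: "M - 1 \<ge> 1" and M2: "M - 1 \<ge> 2 / \<epsilon>" using e by (auto simp: M_def)
  have "1 / (M - 1)\<^sup>2 \<le> 1 / (M - 1)"
    using M1 by (intro divide_left_mono) (auto simp: power2_eq_square)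
  also have "\<dots> \<le> 1 / (2 / \<epsilon>)" using M1 M2 e by (intro divide_left_mono mult_pos_pos) auto
  also have "\<dots> < \<epsilon>" using e by simp
  finally show "\<exists>M::real. M \<ge> 0 \<and> (SUP n\<in>{1::nat..}. SUP \<theta>\<in>(UNIV::real set).
      measure (sample_law n \<theta>) {y \<in> space (sample_law n \<theta>).
        min (sqrt (real n)) (1 / \<mu> n) * \<bar>alasso (\<mu> n) (sample_mean n y) - \<theta>\<bar> > M}) < \<epsilon>"
    using M1 alasso_uniform_rate[of \<mu> M] mu_pos by (intro exI[of _ M]) force
qed

end
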